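(* Let $w$ be a permutation with $\textsf{supp}(w)=X\sqcup Y$ such that either (1) every $x\in X$ commutes with every $y\in Y$ (i.e. $|x-y|\ne1$), in which case let $s$ be any reduced word of $w$; or (2) there is exactly one pair $(x_0,y_0)\in X\times Y$ of noncommuting letters (i.e. with $|x_0-y_0|=1$), and there is a reduced word $s$ of $w$ in which all occurrences of $x_0$ are to the left of all occurrences of $y_0$. Then the subwords $s_X$ and $s_Y$ of $s$ consisting of all letters from $X$, respectively $Y$, are reduced words, and $B(w)\cong B([s_X])\times B([s_Y])$ as posets.
   Context: $\sigma_i=(i,i+1)$; reduced words are sequences of subscripts of reduced expressions, and $[t]$ denotes the permutation represented by a word $t$. $\textsf{supp}(w)$ is the set of letters appearing in reduced words of $w$. $B(u)$ is the principal order ideal of $u$ in the Bruhat order. *)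

theory Defs
  imports "HOL-Combinatorics.Permutations" "HOL-Combinatorics.Transposition"
begin

text \<open>We work in the symmetric group S_n, realised as the permutations of {1..n}.
  Letters of words are the integers 1..n-1; letter i stands for sigma_i = (i,i+1).\<close>

definition sigma :: "nat \<Rightarrow> nat \<Rightarrow> nat" where
  "sigma i = Transposition.transpose i (Suc i)"

definition word_perm :: "nat list \<Rightarrow> nat \<Rightarrow> nat" where
  "word_perm t = foldr (\<lambda>i p. sigma i \<circ> p) t id"

definition valid_word :: "nat \<Rightarrow> nat list \<Rightarrow> bool" where
  "valid_word n t \<longleftrightarrow> set t \<subseteq> {1..<n}"

definition perm_length :: "nat \<Rightarrow> (nat \<Rightarrow> nat) \<Rightarrow> nat" where
  "perm_length n w = (LEAST k. \<exists>t. valid_word n t \<and> word_perm t = w \<and> length t = k)"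

definition reduced_word :: "nat \<Rightarrow> nat list \<Rightarrow> bool" where
  "reduced_word n t \<longleftrightarrow> valid_word n t \<and> length t = perm_length n (word_perm t)"

definition supp :: "nat \<Rightarrow> (nat \<Rightarrow> nat) \<Rightarrow> nat set" where
  "supp n w = {i. \<exists>t. reduced_word n t \<and> word_perm t = w \<and> i \<in> set t}"

definition bruhat_step :: "nat \<Rightarrow> (nat \<Rightarrow> nat) \<Rightarrow> (nat \<Rightarrow> nat) \<Rightarrow> bool" where
  "bruhat_step n u v \<longleftrightarrow> u permutes {1..n} \<and>
     (\<exists>i j. 1 \<le> i \<and> i < j \<and> j \<le> n \<and> v = u \<circ> Transposition.transpose i j
            \<and> perm_length n u < perm_length n v)"

definition bruhat_le :: "nat \<Rightarrow> (nat \<Rightarrow> nat) \<Rightarrow> (nat \<Rightarrow> nat) \<Rightarrow> bool" where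
  "bruhat_le n = (bruhat_step n)\<^sup>*\<^sup>*"

definition bruhat_ideal :: "nat \<Rightarrow> (nat \<Rightarrow> nat) \<Rightarrow> (nat \<Rightarrow> nat) set" where
  "bruhat_ideal n u = {v. v permutes {1..n} \<and> bruhat_le n v u}"

end

(* Everything rests on the subword property of the Bruhat order: for a reduced word s of w,
   B(w) is the set of the [t] for the subwords t of s (one inclusion by the lifting property,
   the other by strong exchange).

   Under either hypothesis every letter of Y in s commutes with all later letters of X, so
   [s] = [s_X][s_Y], and s_X s_Y, having the length of s, is reduced; hence so are s_X and s_Y.
   Subwords of s_X s_Y are concatenations of subwords of s_X and of s_Y, so (a, b) |-> ab maps
   B([s_X]) x B([s_Y]) onto B(w). It is injective because a word in letters of X moves each
   point only across letters of X, and X and Y are disjoint. The same fact shows that reduced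
   words of a' and b' concatenate to a reduced word of a'b'; the subword property for it gives
   ab <= a'b' iff a <= a' and b <= b'. *)

theory Submission
  imports Defs "HOL-Library.Sublist"
begin

lemma word_perm_Nil [simp]: "word_perm [] = id"
  by (simp add: word_perm_def)

lemma word_perm_Cons [simp]: "word_perm (c # t) = sigma c \<circ> word_perm t"
  by (simp add: word_perm_def)

lemma word_perm_append [simp]: "word_perm (t @ t') = word_perm t \<circ> word_perm t'"
  by (induction t) (auto simp: o_assoc)

lemma sigma_sigma_apply [simp]: "sigma i (sigma i x) = x"
  by (simp add: sigma_def)

lemma sigma_comp_sigma_comp [simp]: "sigma i \<circ> (sigma i \<circ> f) = f"
  by (simp add: fun_eq_iff)

lemma sigma_permutes: "1 \<le> i \<Longrightarrow> i < n \<Longrightarrow> sigma i permutes {1..n}"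
  unfolding sigma_def by (rule permutes_swap_id) auto

lemma valid_word_Nil [simp]: "valid_word n []"
  by (simp add: valid_word_def)

lemma valid_word_Cons [simp]: "valid_word n (c # t) \<longleftrightarrow> c \<in> {1..<n} \<and> valid_word n t"
  by (auto simp: valid_word_def)

lemma valid_word_append [simp]: "valid_word n (t @ t') \<longleftrightarrow> valid_word n t \<and> valid_word n t'"
  by (auto simp: valid_word_def)

lemma set_subseq: "subseq t s \<Longrightarrow> set t \<subseteq> set s"
  by (auto elim: list_emb_set)

lemma valid_word_subseq: "subseq t s \<Longrightarrow> valid_word n s \<Longrightarrow> valid_word n t"
  unfolding valid_word_def using set_subseq by blast

lemma word_perm_permutes: "valid_word n t \<Longrightarrow> word_perm t permutes {1..n}"
proof (induction t)
  case (Cons c t)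
  then show ?case
    unfolding word_perm_Cons by (intro permutes_compose sigma_permutes) auto
qed (simp add: permutes_id)

lemma permutation_word_perm: "permutation (word_perm t)"
proof (induction t)
  case (Cons c t)
  then show ?case
    unfolding word_perm_Cons sigma_def by (intro permutation_compose permutation_swap_id)
qed simp

lemma bij_word_perm: "bij (word_perm t)"
  using permutation_word_perm by (rule permutation_bijective)

lemma evenperm_word_perm: "evenperm (word_perm t) \<longleftrightarrow> even (length t)"
proof (induction t)
  case (Cons c t)
  have "evenperm (sigma c \<circ> word_perm t) \<longleftrightarrow> evenperm (sigma c) = evenperm (word_perm t)"
    by (rule evenperm_comp) (simp_all add: sigma_def permutation_swap_id permutation_word_perm)
  moreover have "\<not> evenperm (sigma c)"
    by (simp add: sigma_def evenperm_swap)
  ultimately show ?case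
    using Cons.IH unfolding word_perm_Cons length_Cons even_Suc by blast
qed simp

lemma sigma_comp_transpose_comp_sigma:
  "a < b \<Longrightarrow> sigma b \<circ> Transposition.transpose a b \<circ> sigma b = Transposition.transpose a (Suc b)"
  by (auto simp: fun_eq_iff sigma_def transpose_def)

lemma transpose_word_exists:
  assumes "1 \<le> a" "a < b" "b \<le> n"
  shows "\<exists>t. valid_word n t \<and> word_perm t = Transposition.transpose a b"
  using assms
proof (induction b)
  case (Suc b)
  show ?case
  proof (cases "a = b")
    case True
    then have "valid_word n [a] \<and> word_perm [a] = Transposition.transpose a (Suc b)"
      using Suc.prems by (simp add: sigma_def)
    then show ?thesis by blast
  next
    case False
    with Suc obtain t where t: "valid_word n t" "word_perm t = Transposition.transpose a b"
      by auto
    then have "valid_word n (b # t @ [b])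
        \<and> word_perm (b # t @ [b]) = Transposition.transpose a (Suc b)"
      using Suc.prems False sigma_comp_transpose_comp_sigma[of a b] by (simp add: o_assoc)
    then show ?thesis by blast
  qed
qed simp

lemma permutes_word_exists:
  assumes "p permutes {1..n}"
  shows "\<exists>t. valid_word n t \<and> word_perm t = p"
  using assms finite_atLeastAtMost
proof (induction rule: permutes_induct)
  case id
  then show ?case by (intro exI[of _ "[]"]) auto
next
  case (swap a b p)
  then obtain t where t: "valid_word n t" "word_perm t = p"
    by blast
  obtain t' where t': "valid_word n t'" "word_perm t' = Transposition.transpose a b"
    using transpose_word_exists[of a b n] transpose_word_exists[of b a n] swap.hyps
    by (cases "a < b") (auto simp: transpose_commute)
  then have "valid_word n (t' @ t) \<and> word_perm (t' @ t) = Transposition.transpose a b \<circ> p"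
    using t by simp
  then show ?case by blast
qed

lemma perm_length_le: "valid_word n t \<Longrightarrow> perm_length n (word_perm t) \<le> length t"
  unfolding perm_length_def by (rule Least_le) blast

lemma reduced_word_exists:
  assumes "valid_word n t"
  shows "\<exists>r. reduced_word n r \<and> word_perm r = word_perm t"
proof -
  let ?P = "\<lambda>k. \<exists>r. valid_word n r \<and> word_perm r = word_perm t \<and> length r = k"
  have "?P (Least ?P)"
    by (rule LeastI[of ?P "length t"]) (use assms in blast)
  then obtain r where "valid_word n r" "word_perm r = word_perm t" "length r = Least ?P"
    by blast
  then show ?thesis
    unfolding reduced_word_def perm_length_def by auto
qed

lemma reduced_word_exists_permutes:
  "p permutes {1..n} \<Longrightarrow> \<exists>r. reduced_word n r \<and> word_perm r = p"
  using permutes_word_exists reduced_word_exists by metis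

lemma reduced_word_Nil: "reduced_word n []"
  using perm_length_le[of n "[]"] by (simp add: reduced_word_def)

lemma reduced_word_appendD:
  assumes "reduced_word n (p @ q)"
  shows "reduced_word n p" and "reduced_word n q"
proof -
  have vp: "valid_word n p" and vq: "valid_word n q"
    using assms by (simp_all add: reduced_word_def)
  obtain p' where p': "reduced_word n p'" "word_perm p' = word_perm p"
    using reduced_word_exists[OF vp] by blast
  obtain q' where q': "reduced_word n q'" "word_perm q' = word_perm q"
    using reduced_word_exists[OF vq] by blast
  have "perm_length n (word_perm (p' @ q')) \<le> length p' + length q'"
    using perm_length_le[of n "p' @ q'"] p' q' by (simp add: reduced_word_def)
  moreover have "perm_length n (word_perm p) \<le> length p" "perm_length n (word_perm q) \<le> length q"
    using vp vq by (simp_all add: perm_length_le)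
  ultimately show "reduced_word n p" "reduced_word n q"
    using assms p' q' vp vq by (simp_all add: reduced_word_def)
qed

lemma evenperm_iff_even_perm_length:
  assumes "p permutes {1..n}"
  shows "evenperm p \<longleftrightarrow> even (perm_length n p)"
proof -
  obtain t where "reduced_word n t" "word_perm t = p"
    using reduced_word_exists_permutes[OF assms] by blast
  then show ?thesis
    using evenperm_word_perm[of t] by (simp add: reduced_word_def)
qed

lemma perm_length_comp_transpose_neq:
  assumes "p permutes {1..n}" "a \<in> {1..n}" "b \<in> {1..n}" "a \<noteq> b"
  shows "perm_length n (p \<circ> Transposition.transpose a b) \<noteq> perm_length n p"
proof -
  have "p \<circ> Transposition.transpose a b permutes {1..n}"
    using assms by (intro permutes_compose permutes_swap_id)
  moreover have "evenperm (p \<circ> Transposition.transpose a b) \<longleftrightarrow> \<not> evenperm p"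
    using assms permutation_permutes
    by (subst evenperm_comp) (auto simp: permutation_swap_id evenperm_swap)
  ultimately show ?thesis
    using evenperm_iff_even_perm_length assms(1) by metis
qed

lemma perm_length_sigma_comp_le:
  assumes "p permutes {1..n}" "1 \<le> c" "c < n"
  shows "perm_length n (sigma c \<circ> p) \<le> perm_length n p + 1"
proof -
  obtain t where "reduced_word n t" "word_perm t = p"
    using reduced_word_exists_permutes[OF assms(1)] by blast
  then show ?thesis
    using perm_length_le[of n "c # t"] assms by (simp add: reduced_word_def)
qed

section \<open>Exchange and deletion\<close>

lemma sigma_less_sigma:
  "a < b \<Longrightarrow> \<not> (a = c \<and> b = Suc c) \<Longrightarrow> sigma c a < sigma c b"
  unfolding sigma_def transpose_def by (simp, presburger)

lemma sigma_comp_transpose: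
  "sigma c \<circ> Transposition.transpose a b
     = Transposition.transpose (sigma c a) (sigma c b) \<circ> sigma c"
proof -
  have "Transposition.transpose (sigma c a) (sigma c b) \<circ> sigma c
      = sigma c \<circ> Transposition.transpose (inv (sigma c) (sigma c a)) (inv (sigma c) (sigma c b))"
    unfolding sigma_def by (rule transpose_comp_eq) simp
  then show ?thesis
    by (simp add: sigma_def)
qed

lemma strong_exchange:
  assumes "a < b" "word_perm t b < word_perm t a"
  shows "\<exists>t'. subseq t' t \<and> Suc (length t') = length t
           \<and> word_perm t \<circ> Transposition.transpose a b = word_perm t'"
  using assms
proof (induction t arbitrary: a b rule: rev_induct)
  case (snoc c t)
  show ?case
  proof (cases "a = c \<and> b = Suc c")
    case True
    then have "word_perm (t @ [c]) \<circ> Transposition.transpose a b = word_perm t"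
      by (simp add: sigma_def fun_eq_iff)
    moreover have "subseq t (t @ [c])"
      by (simp add: subseq_rev_drop_many)
    ultimately show ?thesis
      by (metis length_append_singleton)
  next
    case False
    then have "sigma c a < sigma c b"
      using snoc.prems(1) by (rule sigma_less_sigma[rotated])
    moreover have "word_perm t (sigma c b) < word_perm t (sigma c a)"
      using snoc.prems(2) by simp
    ultimately obtain t' where t': "subseq t' t" "Suc (length t') = length t"
      "word_perm t \<circ> Transposition.transpose (sigma c a) (sigma c b) = word_perm t'"
      using snoc.IH by blast
    have "word_perm (t @ [c]) \<circ> Transposition.transpose a b
        = word_perm t \<circ> Transposition.transpose (sigma c a) (sigma c b) \<circ> sigma c"
      by (simp only: word_perm_append word_perm_Cons word_perm_Nil comp_id comp_assoc
          sigma_comp_transpose)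
    also have "\<dots> = word_perm (t' @ [c])"
      using t'(3) by simp
    finally have "word_perm (t @ [c]) \<circ> Transposition.transpose a b = word_perm (t' @ [c])" .
    moreover have "subseq (t' @ [c]) (t @ [c])" "Suc (length (t' @ [c])) = length (t @ [c])"
      using t'(1,2) by simp_all
    ultimately show ?thesis
      by blast
  qed
qed simp

lemma perm_length_comp_transpose_less:
  assumes "p permutes {1..n}" "a < b" "p b < p a"
  shows "perm_length n (p \<circ> Transposition.transpose a b) < perm_length n p"
proof -
  obtain t where t: "reduced_word n t" "word_perm t = p"
    using reduced_word_exists_permutes[OF assms(1)] by blast
  then obtain t' where t': "subseq t' t" "Suc (length t') = length t"
      "p \<circ> Transposition.transpose a b = word_perm t'"
    using strong_exchange[of a b t] assms(2,3) by blast
  have "valid_word n t'"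
    using valid_word_subseq t t'(1) by (auto simp: reduced_word_def)
  then show ?thesis
    using perm_length_le[of n t'] t t' by (simp add: reduced_word_def)
qed

lemma perm_length_comp_transpose_less_iff:
  assumes "p permutes {1..n}" "1 \<le> a" "a < b" "b \<le> n"
  shows "perm_length n (p \<circ> Transposition.transpose a b) < perm_length n p \<longleftrightarrow> p b < p a"
proof
  assume less: "perm_length n (p \<circ> Transposition.transpose a b) < perm_length n p"
  show "p b < p a"
  proof (rule ccontr)
    let ?q = "p \<circ> Transposition.transpose a b"
    assume "\<not> p b < p a"
    moreover have "p a \<noteq> p b"
      using permutes_inj[OF assms(1)] assms(3) by (metis inj_eq less_irrefl)
    ultimately have "?q b < ?q a"
      by simp
    moreover have "?q permutes {1..n}"
      using assms by (intro permutes_compose permutes_swap_id) auto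
    ultimately have "perm_length n (?q \<circ> Transposition.transpose a b) < perm_length n ?q"
      using assms(3) perm_length_comp_transpose_less by blast
    then show False
      using less by (simp add: o_assoc[symmetric])
  qed
qed (use assms perm_length_comp_transpose_less in blast)

lemma shorter_subseq_if_not_reduced:
  assumes "valid_word n p" "\<not> reduced_word n p"
  shows "\<exists>r. subseq r p \<and> length r < length p \<and> word_perm r = word_perm p"
  using assms
proof (induction p rule: rev_induct)
  case (snoc c p)
  then have vp: "valid_word n p" and c: "1 \<le> c" "c < n"
    by auto
  show ?case
  proof (cases "reduced_word n p")
    case False
    then obtain r where "subseq r p" "length r < length p" "word_perm r = word_perm p"
      using snoc.IH vp by blast
    then show ?thesis
      by (intro exI[of _ "r @ [c]"]) simp
  next
    case True
    let ?x = "word_perm p"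
    have px: "?x permutes {1..n}"
      using vp by (rule word_perm_permutes)
    have e: "word_perm (p @ [c]) = ?x \<circ> Transposition.transpose c (Suc c)"
      by (simp add: sigma_def)
    have "perm_length n (word_perm (p @ [c])) < length (p @ [c])"
      using perm_length_le[of n "p @ [c]"] snoc.prems by (simp add: reduced_word_def)
    moreover have "perm_length n (?x \<circ> Transposition.transpose c (Suc c)) \<noteq> perm_length n ?x"
      using c by (intro perm_length_comp_transpose_neq[OF px]) auto
    ultimately have "perm_length n (?x \<circ> Transposition.transpose c (Suc c)) < perm_length n ?x"
      using True e by (simp add: reduced_word_def)
    then have "?x (Suc c) < ?x c"
      using perm_length_comp_transpose_less_iff[OF px, of c "Suc c"] c by simp
    then obtain t' where "subseq t' p" "Suc (length t') = length p"
        "?x \<circ> Transposition.transpose c (Suc c) = word_perm t'"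
      using strong_exchange[of c "Suc c" p] by auto
    then show ?thesis
      using e by (intro exI[of _ t']) (simp add: subseq_rev_drop_many)
  qed
qed (simp add: reduced_word_Nil)

lemma reduced_subseq_exists:
  assumes "valid_word n p"
  shows "\<exists>r. subseq r p \<and> reduced_word n r \<and> word_perm r = word_perm p"
  using assms
proof (induction "length p" arbitrary: p rule: less_induct)
  case less
  show ?case
  proof (cases "reduced_word n p")
    case False
    then obtain r where r: "subseq r p" "length r < length p" "word_perm r = word_perm p"
      using shorter_subseq_if_not_reduced less.prems by blast
    moreover have "valid_word n r"
      using valid_word_subseq r(1) less.prems by blast
    ultimately show ?thesis
      using less.hyps subseq_order.trans by metis
  qed auto
qed

section \<open>The subword property of the Bruhat order\<close>

lemma bruhat_le_refl [simp]: "bruhat_le n u u"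
  by (simp add: bruhat_le_def)

lemma bruhat_le_trans: "bruhat_le n u v \<Longrightarrow> bruhat_le n v w \<Longrightarrow> bruhat_le n u w"
  unfolding bruhat_le_def by (rule rtranclp_trans)

lemma bruhat_step_imp_le: "bruhat_step n u v \<Longrightarrow> bruhat_le n u v"
  unfolding bruhat_le_def by (rule r_into_rtranclp)

lemma bruhat_stepI:
  assumes "u permutes {1..n}" "i \<in> {1..n}" "j \<in> {1..n}" "i \<noteq> j"
    and "v = u \<circ> Transposition.transpose i j" "perm_length n u < perm_length n v"
  shows "bruhat_step n u v"
proof (cases "i < j")
  case False
  with assms show ?thesis
    unfolding bruhat_step_def by (intro conjI exI[of _ j] exI[of _ i]) (auto simp: transpose_commute)
qed (use assms in \<open>auto simp: bruhat_step_def\<close>)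

lemma bruhat_step_Cons:
  assumes "reduced_word n (c # s)"
  shows "bruhat_step n (word_perm s) (word_perm (c # s))"
proof -
  let ?x = "word_perm s"
  have vs: "valid_word n s" and c: "c \<in> {1..<n}"
    using assms by (simp_all add: reduced_word_def)
  have px: "?x permutes {1..n}"
    using vs by (rule word_perm_permutes)
  have pinv: "inv ?x permutes {1..n}"
    using px by (rule permutes_inv)
  then have "inv ?x c \<in> {1..n}" "inv ?x (Suc c) \<in> {1..n}"
    using c permutes_in_image[OF pinv] by auto
  moreover have "inv ?x c \<noteq> inv ?x (Suc c)"
    using permutes_inj[OF pinv] by (metis inj_eq n_not_Suc_n)
  moreover have "word_perm (c # s) = ?x \<circ> Transposition.transpose (inv ?x c) (inv ?x (Suc c))"
    unfolding word_perm_Cons sigma_def by (rule transpose_comp_eq[OF permutes_bij[OF px]])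
  moreover have "perm_length n ?x < perm_length n (word_perm (c # s))"
    using perm_length_le[OF vs] assms by (simp add: reduced_word_def)
  ultimately show ?thesis
    using px by (intro bruhat_stepI) auto
qed

text \<open>The key case of the lifting property, where \<open>\<sigma>\<^sub>c\<close> lengthens \<open>u\<close> but shortens \<open>w\<close>:
  then \<open>l(\<sigma>\<^sub>c u) = l(w) = l(\<sigma>\<^sub>c w) + 1\<close>. Strong exchange on a reduced word \<open>c r\<close> of \<open>w\<close>
  deletes one letter to give a word of \<open>u\<close>; had it kept the leading \<open>c\<close>, then \<open>\<sigma>\<^sub>c u\<close>
  would have a word shorter than \<open>l(\<sigma>\<^sub>c u)\<close>. So \<open>u = [r] = \<sigma>\<^sub>c w\<close>.\<close>

lemma sigma_comp_eq_if_bruhat_step: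
  assumes step: "bruhat_step n u w" and c: "1 \<le> c" "c < n"
    and shorter: "perm_length n (sigma c \<circ> w) < perm_length n (sigma c \<circ> u)"
  shows "sigma c \<circ> u = w"
proof -
  from step obtain i j where pu: "u permutes {1..n}" and ij: "1 \<le> i" "i < j" "j \<le> n"
    and w: "w = u \<circ> Transposition.transpose i j" and lt: "perm_length n u < perm_length n w"
    unfolding bruhat_step_def by blast
  let ?s = "sigma c"
  have pw: "w permutes {1..n}"
    unfolding w using ij by (intro permutes_compose[OF _ pu] permutes_swap_id) auto
  then have psw: "?s \<circ> w permutes {1..n}"
    using sigma_permutes[OF c] by (rule permutes_compose)
  have "perm_length n (?s \<circ> u) \<le> perm_length n u + 1"
    using perm_length_sigma_comp_le[OF pu c] .
  moreover have "perm_length n w \<le> perm_length n (?s \<circ> w) + 1"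
    using perm_length_sigma_comp_le[OF psw c] by simp
  ultimately have len: "perm_length n (?s \<circ> u) = perm_length n (?s \<circ> w) + 1"
    using lt shorter by linarith
  obtain r where r: "reduced_word n r" "word_perm r = ?s \<circ> w"
    using reduced_word_exists_permutes[OF psw] by blast
  have u: "u = w \<circ> Transposition.transpose i j"
    unfolding w by (simp add: o_assoc[symmetric])
  then have "w j < w i"
    using perm_length_comp_transpose_less_iff[OF pw ij] lt by simp
  moreover have "word_perm (c # r) = w"
    using r(2) by simp
  ultimately obtain t' where t': "subseq t' (c # r)" "length t' = length r" "u = word_perm t'"
    using strong_exchange[of i j "c # r"] ij u by auto
  from t'(1) consider "subseq t' r" | t'' where "t' = c # t''" "subseq t'' r"
    by (cases rule: list_emb.cases) auto
  then show ?thesis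
  proof cases
    case 1
    then have "t' = r"
      using t'(2) subseq_same_length by blast
    then show ?thesis
      using t'(3) r(2) by simp
  next
    case 2
    then have "valid_word n t''" "?s \<circ> u = word_perm t''"
      using r(1) t'(3) valid_word_subseq by (auto simp: reduced_word_def)
    then have "perm_length n (?s \<circ> u) \<le> length r - 1"
      using perm_length_le[of n t''] t'(2) 2(1) by simp
    then show ?thesis
      using len r by (simp add: reduced_word_def)
  qed
qed

lemma bruhat_step_lift:
  assumes step: "bruhat_step n u w" and c: "1 \<le> c" "c < n"
  shows "bruhat_le n (sigma c \<circ> u) w \<or> bruhat_le n (sigma c \<circ> u) (sigma c \<circ> w)"
proof -
  from step obtain i j where pu: "u permutes {1..n}" and ij: "1 \<le> i" "i < j" "j \<le> n"
    and w: "w = u \<circ> Transposition.transpose i j"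
    unfolding bruhat_step_def by blast
  have psu: "sigma c \<circ> u permutes {1..n}"
    using pu sigma_permutes[OF c] by (rule permutes_compose)
  have sw: "sigma c \<circ> w = (sigma c \<circ> u) \<circ> Transposition.transpose i j"
    unfolding w by (simp add: o_assoc)
  show ?thesis
  proof (cases "perm_length n (sigma c \<circ> u) < perm_length n (sigma c \<circ> w)")
    case True
    then have "bruhat_step n (sigma c \<circ> u) (sigma c \<circ> w)"
      using psu ij sw by (intro bruhat_stepI) auto
    then show ?thesis
      using bruhat_step_imp_le by blast
  next
    case False
    moreover have "perm_length n (sigma c \<circ> w) \<noteq> perm_length n (sigma c \<circ> u)"
      using perm_length_comp_transpose_neq[OF psu, of i j] ij sw by auto
    ultimately have "sigma c \<circ> u = w"
      by (intro sigma_comp_eq_if_bruhat_step[OF step c]) simp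
    then show ?thesis
      by simp
  qed
qed

lemma bruhat_le_lift:
  assumes "bruhat_le n u w" "1 \<le> c" "c < n"
  shows "bruhat_le n (sigma c \<circ> u) w \<or> bruhat_le n (sigma c \<circ> u) (sigma c \<circ> w)"
  using assms(1) unfolding bruhat_le_def
proof (induction rule: rtranclp_induct)
  case (step v z)
  then have "bruhat_le n v z"
    by (simp add: bruhat_step_imp_le)
  moreover have "bruhat_le n (sigma c \<circ> v) z \<or> bruhat_le n (sigma c \<circ> v) (sigma c \<circ> z)"
    using bruhat_step_lift[OF step.hyps(2) assms(2,3)] .
  ultimately show ?case
    using step.IH unfolding bruhat_le_def by (meson rtranclp_trans)
qed simp

lemma subseq_imp_bruhat_le:
  assumes "reduced_word n s" "subseq t s"
  shows "bruhat_le n (word_perm t) (word_perm s)"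
  using assms
proof (induction s arbitrary: t)
  case (Cons c s)
  have rs: "reduced_word n s"
    using reduced_word_appendD(2)[of n "[c]" s] Cons.prems(1) by simp
  have c: "1 \<le> c" "c < n"
    using Cons.prems(1) by (simp_all add: reduced_word_def)
  have step: "bruhat_le n (word_perm s) (word_perm (c # s))"
    using bruhat_step_Cons[OF Cons.prems(1)] by (rule bruhat_step_imp_le)
  from Cons.prems(2) consider "subseq t s" | t' where "t = c # t'" "subseq t' s"
    by (cases rule: list_emb.cases) auto
  then show ?case
  proof cases
    case 1
    then show ?thesis
      using Cons.IH[OF rs] step bruhat_le_trans by blast
  next
    case 2
    then have "bruhat_le n (word_perm t') (word_perm s)"
      using Cons.IH[OF rs] by blast
    then have "bruhat_le n (word_perm t) (word_perm s) \<or> bruhat_le n (word_perm t) (word_perm (c # s))"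
      using bruhat_le_lift[OF _ c] unfolding 2(1) word_perm_Cons by blast
    then show ?thesis
      using step bruhat_le_trans by blast
  qed
qed (auto dest: list_emb_Nil2)

lemma bruhat_le_imp_subseq:
  assumes "bruhat_le n u w" "word_perm s = w"
  shows "\<exists>t. subseq t s \<and> word_perm t = u"
  using assms(1) unfolding bruhat_le_def
proof (induction rule: converse_rtranclp_induct)
  case base
  show ?case
    using assms(2) by blast
next
  case (step u v)
  then obtain t where t: "subseq t s" "word_perm t = v"
    by blast
  from step.hyps(1) obtain i j where pu: "u permutes {1..n}" and ij: "1 \<le> i" "i < j" "j \<le> n"
    and v: "v = u \<circ> Transposition.transpose i j" and lt: "perm_length n u < perm_length n v"
    unfolding bruhat_step_def by blast
  have pv: "v permutes {1..n}"
    unfolding v using ij by (intro permutes_compose[OF _ pu] permutes_swap_id) auto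
  have vu: "v \<circ> Transposition.transpose i j = u"
    unfolding v by (simp add: o_assoc[symmetric])
  then have "v j < v i"
    using perm_length_comp_transpose_less_iff[OF pv ij] lt by simp
  then obtain t' where "subseq t' t" "word_perm t' = u"
    using strong_exchange[of i j t] ij t(2) vu by auto
  then show ?case
    using t(1) subseq_order.trans by blast
qed

lemma bruhat_ideal_reduced_word:
  assumes "reduced_word n s"
  shows "bruhat_ideal n (word_perm s) = word_perm ` {t. subseq t s}"
proof -
  have "valid_word n s"
    using assms by (simp add: reduced_word_def)
  then show ?thesis
    unfolding bruhat_ideal_def
    using subseq_imp_bruhat_le[OF assms] bruhat_le_imp_subseq[of n _ _ s]
      valid_word_subseq word_perm_permutes by blast
qed

lemma bruhat_ideal_append:
  assumes "reduced_word n (p @ q)"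
  shows "bruhat_ideal n (word_perm (p @ q))
    = (\<lambda>(a, b). a \<circ> b) ` (bruhat_ideal n (word_perm p) \<times> bruhat_ideal n (word_perm q))"
proof -
  have "word_perm ` {t. subseq t (p @ q)}
      = (\<lambda>(t1, t2). word_perm t1 \<circ> word_perm t2) ` ({t. subseq t p} \<times> {t. subseq t q})"
  proof (intro equalityI subsetI)
    fix u
    assume "u \<in> word_perm ` {t. subseq t (p @ q)}"
    then obtain t1 t2 where "subseq t1 p" "subseq t2 q" "u = word_perm (t1 @ t2)"
      by (auto elim: subseq_appendE)
    then show "u \<in> (\<lambda>(t1, t2). word_perm t1 \<circ> word_perm t2) ` ({t. subseq t p} \<times> {t. subseq t q})"
      by auto
  next
    fix u
    assume "u \<in> (\<lambda>(t1, t2). word_perm t1 \<circ> word_perm t2) ` ({t. subseq t p} \<times> {t. subseq t q})"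
    then obtain t1 t2 where "subseq t1 p" "subseq t2 q" "u = word_perm (t1 @ t2)"
      by auto
    then show "u \<in> word_perm ` {t. subseq t (p @ q)}"
      using list_emb_append_mono by blast
  qed
  also have "\<dots> = (\<lambda>(a, b). a \<circ> b) ` (word_perm ` {t. subseq t p} \<times> word_perm ` {t. subseq t q})"
    by (auto simp: image_iff)
  finally show ?thesis
    using bruhat_ideal_reduced_word assms reduced_word_appendD by metis
qed

lemma bruhat_ideal_reduced_word_exists:
  assumes "valid_word n p" "u \<in> bruhat_ideal n (word_perm p)"
  shows "\<exists>r. reduced_word n r \<and> set r \<subseteq> set p \<and> word_perm r = u"
proof -
  obtain t where t: "subseq t p" "word_perm t = u"
    using assms(2) bruhat_le_imp_subseq[of n u "word_perm p" p] by (auto simp: bruhat_ideal_def)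
  then obtain r where "subseq r t" "reduced_word n r" "word_perm r = u"
    using reduced_subseq_exists valid_word_subseq assms(1) by metis
  then show ?thesis
    using t(1) set_subseq by blast
qed

lemma bruhat_ideal_subset:
  "v \<in> bruhat_ideal n w \<Longrightarrow> bruhat_ideal n v \<subseteq> bruhat_ideal n w"
  unfolding bruhat_ideal_def using bruhat_le_trans by blast

section \<open>Words in two separated alphabets\<close>

definition joined :: "nat set \<Rightarrow> nat \<Rightarrow> nat \<Rightarrow> bool" where
  "joined X k m \<longleftrightarrow> {min k m..<max k m} \<subseteq> X"

lemma joined_sym: "joined X k m \<longleftrightarrow> joined X m k"
  by (simp add: joined_def min.commute max.commute)

lemma joined_trans:
  assumes "joined X k m" "joined X m z"
  shows "joined X k z"
  unfolding joined_def
proof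
  fix j
  assume "j \<in> {min k z..<max k z}"
  then have "j \<in> {min k m..<max k m} \<or> j \<in> {min m z..<max m z}"
    unfolding atLeastLessThan_iff by arith
  then show "j \<in> X"
    using assms unfolding joined_def by blast
qed

lemma joined_sigma: "c \<in> X \<Longrightarrow> joined X m (sigma c m)"
  unfolding joined_def sigma_def transpose_def by auto

lemma joined_word_perm: "set p \<subseteq> X \<Longrightarrow> joined X k (word_perm p k)"
proof (induction p)
  case (Cons c p)
  then show ?case
    using joined_trans joined_sigma by simp
qed (simp add: joined_def)

text \<open>A word in letters from \<open>X\<close> moves a point \<open>k\<close> only to points \<open>m\<close> with
  \<open>joined X k m\<close>, and as \<open>X\<close> and \<open>Y\<close> are disjoint no two distinct points are joined in
  both. Hence \<open>[p][q] k\<close> determines \<open>[q] k\<close>.\<close>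

lemma word_perm_comp_unique:
  assumes "set p \<subseteq> X" "set p' \<subseteq> X" "set q \<subseteq> Y" "set q' \<subseteq> Y" "X \<inter> Y = {}"
    and eq: "word_perm p \<circ> word_perm q = word_perm p' \<circ> word_perm q'"
  shows "word_perm p = word_perm p'" and "word_perm q = word_perm q'"
proof -
  show q: "word_perm q = word_perm q'"
  proof
    fix k
    let ?m = "word_perm q k" and ?m' = "word_perm q' k"
    have "joined Y ?m ?m'"
      using joined_word_perm[of q Y k] joined_word_perm[of q' Y k] assms(3,4)
      by (metis joined_sym joined_trans)
    moreover have "joined X ?m ?m'"
      using joined_word_perm[of p X ?m] joined_word_perm[of p' X ?m'] assms(1,2) fun_cong[OF eq, of k]
      by (metis comp_apply joined_sym joined_trans)
    moreover have False if "?m \<noteq> ?m'" "joined Y ?m ?m'" "joined X ?m ?m'"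
    proof -
      have "min ?m ?m' \<in> {min ?m ?m'..<max ?m ?m'}"
        using that(1) by auto
      then show False
        using that(2,3) assms(5) unfolding joined_def by blast
    qed
    ultimately show "?m = ?m'"
      by blast
  qed
  show "word_perm p = word_perm p'"
    using eq bij_is_surj[OF bij_word_perm[of q']] unfolding q
    by (metis comp_apply fun_eq_iff surjD)
qed

lemma reduced_word_append_disjoint:
  assumes "reduced_word n p" "reduced_word n q" "set p \<subseteq> X" "set q \<subseteq> Y" "X \<inter> Y = {}"
  shows "reduced_word n (p @ q)"
proof -
  have vp: "valid_word n p" and vq: "valid_word n q"
    using assms(1,2) by (simp_all add: reduced_word_def)
  then obtain r where r: "subseq r (p @ q)" "reduced_word n r" "word_perm r = word_perm (p @ q)"
    using reduced_subseq_exists[of n "p @ q"] by auto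
  then obtain p1 q1 where pq: "r = p1 @ q1" "subseq p1 p" "subseq q1 q"
    by (auto elim: subseq_appendE)
  moreover have "set p1 \<subseteq> X" "set q1 \<subseteq> Y"
    using pq set_subseq assms(3,4) by blast+
  ultimately have "word_perm p1 = word_perm p" "word_perm q1 = word_perm q"
    using word_perm_comp_unique[of p1 X p q1 Y q] r(3) assms(3-5) by simp_all
  moreover have "perm_length n (word_perm p1) \<le> length p1" "perm_length n (word_perm q1) \<le> length q1"
    using pq vp vq valid_word_subseq perm_length_le by blast+
  ultimately have "length (p @ q) \<le> length r"
    using assms(1,2) pq(1) by (simp add: reduced_word_def)
  then show ?thesis
    using r perm_length_le[of n "p @ q"] vp vq by (simp add: reduced_word_def)
qed

lemma bruhat_ideal_comp_unique:
  assumes "valid_word n p" "valid_word n q" "set p \<subseteq> X" "set q \<subseteq> Y" "X \<inter> Y = {}"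
    and "a \<in> bruhat_ideal n (word_perm p)" "a1 \<in> bruhat_ideal n (word_perm p)"
    and "b \<in> bruhat_ideal n (word_perm q)" "b1 \<in> bruhat_ideal n (word_perm q)"
    and "a \<circ> b = a1 \<circ> b1"
  shows "a = a1" and "b = b1"
proof -
  obtain r r1 where "set r \<subseteq> X" "word_perm r = a" "set r1 \<subseteq> X" "word_perm r1 = a1"
    using bruhat_ideal_reduced_word_exists[OF assms(1)] assms(3,6,7) by (metis order_trans)
  moreover obtain t t1 where "set t \<subseteq> Y" "word_perm t = b" "set t1 \<subseteq> Y" "word_perm t1 = b1"
    using bruhat_ideal_reduced_word_exists[OF assms(2)] assms(4,8,9) by (metis order_trans)
  ultimately show "a = a1" "b = b1"
    using word_perm_comp_unique[of r X r1 t Y t1] assms(5,10) by auto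
qed

lemma bij_betw_comp_bruhat_ideal:
  assumes red: "reduced_word n (p @ q)" and "set p \<subseteq> X" "set q \<subseteq> Y" "X \<inter> Y = {}"
  shows "bij_betw (\<lambda>(a, b). a \<circ> b)
    (bruhat_ideal n (word_perm p) \<times> bruhat_ideal n (word_perm q)) (bruhat_ideal n (word_perm (p @ q)))"
proof -
  have "valid_word n p" "valid_word n q"
    using red by (simp_all add: reduced_word_def)
  then show ?thesis
    unfolding bij_betw_def bruhat_ideal_append[OF red]
    using bruhat_ideal_comp_unique assms(2-4) by (auto intro: inj_onI)
qed

lemma bruhat_le_comp_iff:
  assumes "valid_word n p" "valid_word n q" "set p \<subseteq> X" "set q \<subseteq> Y" "X \<inter> Y = {}"
    and ab: "a \<in> bruhat_ideal n (word_perm p)" "b \<in> bruhat_ideal n (word_perm q)"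
    and ab': "a' \<in> bruhat_ideal n (word_perm p)" "b' \<in> bruhat_ideal n (word_perm q)"
  shows "bruhat_le n (a \<circ> b) (a' \<circ> b') \<longleftrightarrow> bruhat_le n a a' \<and> bruhat_le n b b'"
proof -
  obtain r where r: "reduced_word n r" "set r \<subseteq> X" "word_perm r = a'"
    using bruhat_ideal_reduced_word_exists[OF assms(1) ab'(1)] assms(3) by (metis order_trans)
  obtain t where t: "reduced_word n t" "set t \<subseteq> Y" "word_perm t = b'"
    using bruhat_ideal_reduced_word_exists[OF assms(2) ab'(2)] assms(4) by (metis order_trans)
  have red: "reduced_word n (r @ t)"
    using r t assms(5) by (intro reduced_word_append_disjoint)
  have ideals: "bruhat_ideal n a' \<subseteq> bruhat_ideal n (word_perm p)"
    "bruhat_ideal n b' \<subseteq> bruhat_ideal n (word_perm q)"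
    using ab' bruhat_ideal_subset by blast+
  have perm: "a permutes {1..n}" "b permutes {1..n}"
    using ab unfolding bruhat_ideal_def by blast+
  then have "bruhat_le n (a \<circ> b) (a' \<circ> b') \<longleftrightarrow> a \<circ> b \<in> bruhat_ideal n (word_perm (r @ t))"
    using r(3) t(3) by (simp add: bruhat_ideal_def permutes_compose)
  also have "\<dots> \<longleftrightarrow> (\<exists>a1\<in>bruhat_ideal n a'. \<exists>b1\<in>bruhat_ideal n b'. a \<circ> b = a1 \<circ> b1)"
    unfolding bruhat_ideal_append[OF red] r(3) t(3) by fastforce
  also have "\<dots> \<longleftrightarrow> a \<in> bruhat_ideal n a' \<and> b \<in> bruhat_ideal n b'"
    using bruhat_ideal_comp_unique[OF assms(1-5) ab(1) _ ab(2)] ideals by blast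
  also have "\<dots> \<longleftrightarrow> bruhat_le n a a' \<and> bruhat_le n b b'"
    using perm by (simp add: bruhat_ideal_def)
  finally show ?thesis .
qed

fun separable :: "nat set \<Rightarrow> nat set \<Rightarrow> nat list \<Rightarrow> bool" where
  "separable X Y [] \<longleftrightarrow> True"
| "separable X Y (c # t) \<longleftrightarrow>
     separable X Y t \<and> (c \<in> Y \<longrightarrow> (\<forall>x\<in>set t. x \<in> X \<longrightarrow> x \<noteq> Suc c \<and> c \<noteq> Suc x))"

lemma sigma_comp_commute:
  "a \<noteq> b \<Longrightarrow> a \<noteq> Suc b \<Longrightarrow> b \<noteq> Suc a \<Longrightarrow> sigma a \<circ> sigma b = sigma b \<circ> sigma a"
  by (simp add: fun_eq_iff sigma_def transpose_def)

lemma sigma_comp_word_perm_commute: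
  assumes "\<forall>x\<in>set p. x \<noteq> c \<and> x \<noteq> Suc c \<and> c \<noteq> Suc x"
  shows "sigma c \<circ> word_perm p = word_perm p \<circ> sigma c"
  using assms
proof (induction p)
  case (Cons d p)
  have "sigma c \<circ> sigma d = sigma d \<circ> sigma c"
    using Cons.prems by (intro sigma_comp_commute) auto
  moreover have "sigma c \<circ> word_perm p = word_perm p \<circ> sigma c"
    using Cons.prems by (intro Cons.IH) simp
  ultimately show ?case
    unfolding word_perm_Cons by (metis comp_assoc)
qed simp

lemma word_perm_separable:
  assumes "separable X Y t" "set t \<subseteq> X \<union> Y" "X \<inter> Y = {}"
  shows "word_perm t = word_perm (filter (\<lambda>a. a \<in> X) t) \<circ> word_perm (filter (\<lambda>a. a \<in> Y) t)"
  using assms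
proof (induction t)
  case (Cons c t)
  let ?tX = "filter (\<lambda>a. a \<in> X) t" and ?tY = "filter (\<lambda>a. a \<in> Y) t"
  have IH: "word_perm t = word_perm ?tX \<circ> word_perm ?tY"
    using Cons.prems by (intro Cons.IH) auto
  show ?case
  proof (cases "c \<in> X")
    case True
    then have filters: "filter (\<lambda>a. a \<in> X) (c # t) = c # ?tX" "filter (\<lambda>a. a \<in> Y) (c # t) = ?tY"
      using Cons.prems(3) by auto
    show ?thesis
      by (simp only: filters word_perm_Cons IH comp_assoc)
  next
    case False
    then have "c \<in> Y"
      using Cons.prems(2) by simp
    then have filters: "filter (\<lambda>a. a \<in> X) (c # t) = ?tX" "filter (\<lambda>a. a \<in> Y) (c # t) = c # ?tY"
      using False by auto
    have "sigma c \<circ> word_perm ?tX = word_perm ?tX \<circ> sigma c"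
      using Cons.prems False \<open>c \<in> Y\<close> by (intro sigma_comp_word_perm_commute) auto
    then show ?thesis
      by (simp only: filters word_perm_Cons IH comp_assoc[symmetric])
  qed
qed simp

lemma separable_if_commuting:
  "\<forall>x\<in>X. \<forall>y\<in>Y. x \<noteq> Suc y \<and> y \<noteq> Suc x \<Longrightarrow> separable X Y t"
  by (induction t) auto

lemma separable_if_ordered:
  assumes "{(x, y). x \<in> X \<and> y \<in> Y \<and> (x = Suc y \<or> y = Suc x)} \<subseteq> {(x0, y0)}"
    and "\<forall>i j. i < length t \<longrightarrow> j < length t \<longrightarrow> t ! i = x0 \<longrightarrow> t ! j = y0 \<longrightarrow> i < j"
  shows "separable X Y t"
  using assms(2)
proof (induction t)
  case (Cons c t)
  have "separable X Y t"
    using Cons.prems by (intro Cons.IH) (metis Suc_less_eq length_Cons nth_Cons_Suc)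
  moreover have "x \<noteq> Suc c \<and> c \<noteq> Suc x" if c: "c \<in> Y" and x: "x \<in> set t" "x \<in> X" for x
  proof (rule ccontr)
    assume "\<not> (x \<noteq> Suc c \<and> c \<noteq> Suc x)"
    then have "x = x0" "c = y0"
      using assms(1) c x(2) by blast+
    moreover obtain j where "j < length t" "t ! j = x"
      using x(1) by (metis in_set_conv_nth)
    ultimately show False
      using Cons.prems[rule_format, of "Suc j" 0] by simp
  qed
  ultimately show ?case
    by simp
qed simp

lemma reduced_word_filter_append:
  assumes "reduced_word n s" "separable X Y s" "set s \<subseteq> X \<union> Y" "X \<inter> Y = {}"
  shows "reduced_word n (filter (\<lambda>a. a \<in> X) s @ filter (\<lambda>a. a \<in> Y) s)"
    and "word_perm (filter (\<lambda>a. a \<in> X) s @ filter (\<lambda>a. a \<in> Y) s) = word_perm s"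
proof -
  let ?sX = "filter (\<lambda>a. a \<in> X) s" and ?sY = "filter (\<lambda>a. a \<in> Y) s"
  show w: "word_perm (?sX @ ?sY) = word_perm s"
    using word_perm_separable[OF assms(2-4)] by (simp only: word_perm_append)
  have "?sY = filter (\<lambda>a. a \<notin> X) s"
    using assms(3,4) by (intro filter_cong) auto
  then have "length (?sX @ ?sY) = length s"
    using sum_length_filter_compl[of "\<lambda>a. a \<in> X" s] by simp
  moreover have "valid_word n (?sX @ ?sY)"
    using assms(1) valid_word_subseq[OF subseq_filter_left] by (simp add: reduced_word_def)
  ultimately show "reduced_word n (?sX @ ?sY)"
    using assms(1) w by (simp add: reduced_word_def)
qed

lemma rel_iso_inverse_exists:
  assumes "bij_betw g S T" "\<And>x y. x \<in> S \<Longrightarrow> y \<in> S \<Longrightarrow> R (g x) (g y) \<longleftrightarrow> Q x y"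
  shows "\<exists>f. bij_betw f T S \<and> (\<forall>u\<in>T. \<forall>v\<in>T. R u v \<longleftrightarrow> Q (f u) (f v))"
proof (intro exI conjI ballI)
  show bij: "bij_betw (the_inv_into S g) T S"
    using assms(1) by (rule bij_betw_the_inv_into)
  fix u v
  assume uv: "u \<in> T" "v \<in> T"
  then have "the_inv_into S g u \<in> S" "the_inv_into S g v \<in> S"
    using bij_betwE[OF bij] by blast+
  moreover have "g (the_inv_into S g u) = u" "g (the_inv_into S g v) = v"
    using f_the_inv_into_f_bij_betw[OF assms(1)] uv by blast+
  ultimately show "R u v \<longleftrightarrow> Q (the_inv_into S g u) (the_inv_into S g v)"
    using assms(2) by metis
qed

theorem lemma3p2:
  fixes n :: nat and w :: "nat \<Rightarrow> nat" and X Y :: "nat set" and s :: "nat list"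
  assumes w: "w permutes {1..n}"
    and XY: "supp n w = X \<union> Y" "X \<inter> Y = {}"
    and s: "reduced_word n s" "word_perm s = w"
    and cases: "(\<forall>x\<in>X. \<forall>y\<in>Y. x \<noteq> Suc y \<and> y \<noteq> Suc x)
       \<or> (\<exists>x0 y0. {(x, y). x \<in> X \<and> y \<in> Y \<and> (x = Suc y \<or> y = Suc x)} = {(x0, y0)}
            \<and> (\<forall>i j. i < length s \<longrightarrow> j < length s \<longrightarrow> s ! i = x0 \<longrightarrow> s ! j = y0 \<longrightarrow> i < j))"
  shows "reduced_word n (filter (\<lambda>a. a \<in> X) s) \<and> reduced_word n (filter (\<lambda>a. a \<in> Y) s)
    \<and> (\<exists>f. bij_betw f (bruhat_ideal n w)
              (bruhat_ideal n (word_perm (filter (\<lambda>a. a \<in> X) s))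
                \<times> bruhat_ideal n (word_perm (filter (\<lambda>a. a \<in> Y) s)))
         \<and> (\<forall>u\<in>bruhat_ideal n w. \<forall>v\<in>bruhat_ideal n w.
              bruhat_le n u v \<longleftrightarrow>
                (bruhat_le n (fst (f u)) (fst (f v)) \<and> bruhat_le n (snd (f u)) (snd (f v)))))"
proof -
  let ?sX = "filter (\<lambda>a. a \<in> X) s" and ?sY = "filter (\<lambda>a. a \<in> Y) s"
  have "set s \<subseteq> X \<union> Y"
    using XY(1) s unfolding supp_def by blast
  moreover have "separable X Y s"
    using cases by (blast intro: separable_if_commuting separable_if_ordered[OF equalityD1])
  ultimately have red: "reduced_word n (?sX @ ?sY)" and w_eq: "word_perm (?sX @ ?sY) = w"
    using reduced_word_filter_append XY(2) s by blast+
  have "valid_word n ?sX" "valid_word n ?sY" "set ?sX \<subseteq> X" "set ?sY \<subseteq> Y"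
    using red by (auto simp: reduced_word_def)
  note le_comp_iff = bruhat_le_comp_iff[OF this XY(2)]
  have "bruhat_le n ((\<lambda>(a, b). a \<circ> b) x) ((\<lambda>(a, b). a \<circ> b) y)
      \<longleftrightarrow> bruhat_le n (fst x) (fst y) \<and> bruhat_le n (snd x) (snd y)"
    if "x \<in> bruhat_ideal n (word_perm ?sX) \<times> bruhat_ideal n (word_perm ?sY)"
      and "y \<in> bruhat_ideal n (word_perm ?sX) \<times> bruhat_ideal n (word_perm ?sY)" for x y
    using le_comp_iff that by (auto simp: mem_Times_iff split: prod.splits)
  from rel_iso_inverse_exists[where R = "bruhat_le n", OF
      bij_betw_comp_bruhat_ideal[OF red \<open>set ?sX \<subseteq> X\<close> \<open>set ?sY \<subseteq> Y\<close> XY(2), unfolded w_eq] this]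
    reduced_word_appendD[OF red]
  show ?thesis
    by blast
qed

end
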